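(* For $n\ge 3$ and $1\le m\le n-2$, $$a(n,m)=(n-1)\,a(n-1,m-1)+a(n-1,m).$$
   Context: For $k\ge 2$, $A_k$ is the alternating group on $\{1,\dots,k\}$, $T(A_k)=\{(1\,2)(i\,j)\mid 1\le i<j\le k\}$, and for $v\in A_k$, $\ell_{T(A_k)}(v)=\min\{r\ge 0\mid v=t_1\cdots t_r,\ t_i\in T(A_k)\}$. $a(k,m)$ denotes the number of $v\in A_k$ with $\ell_{T(A_k)}(v)=m$. *)

theory Defs
  imports "HOL-Combinatorics.Combinatorics"
begin

definition alt_group :: "nat \<Rightarrow> (nat \<Rightarrow> nat) set" where
  "alt_group k = {p. p permutes {1..k} \<and> evenperm p}"

definition T_alt :: "nat \<Rightarrow> (nat \<Rightarrow> nat) set" where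
  "T_alt k = {transpose 1 2 \<circ> transpose i j | i j. 1 \<le> i \<and> i < j \<and> j \<le> k}"

definition len_T :: "nat \<Rightarrow> (nat \<Rightarrow> nat) \<Rightarrow> nat" where
  "len_T k v = (LEAST r. \<exists>ts. length ts = r \<and> set ts \<subseteq> T_alt k \<and> v = foldr (\<circ>) ts id)"

definition a_count :: "nat \<Rightarrow> nat \<Rightarrow> nat" where
  "a_count k m = card {v \<in> alt_group k. len_T k v = m}"

end

theory Submission
  imports Defs
begin

text \<open>Multiplying out a word over \<open>T(A_k) = {(1 2) t}\<close>, the factors \<open>(1 2)\<close> cancel in pairs after
  conjugation, so \<open>v\<close> is a product of \<open>r\<close> elements of \<open>T(A_k)\<close> iff \<open>v\<close> (for even \<open>r\<close>) or
  \<open>(1 2) v\<close> (for odd \<open>r\<close>) is a product of \<open>r\<close> transpositions. Hence \<open>\<ell>(v)\<close> is the smaller of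
  the transposition lengths of \<open>v\<close> and \<open>(1 2) v\<close>. Computing transposition length by peeling
  off the largest point, \<open>v = v' \<circ> (c k)\<close> with \<open>v'\<close> fixing \<open>k\<close>, the peeling steps at levels
  \<open>3..k\<close> agree for \<open>v\<close> and \<open>(1 2) v\<close>, so \<open>\<ell>(v)\<close> counts the nontrivial ones. An even \<open>v\<close> of
  length \<open>m\<close> on \<open>{1..n}\<close> either fixes \<open>n\<close>, giving \<open>a(n-1,m)\<close>, or is \<open>v' \<circ> (c n)\<close> with
  \<open>c < n\<close> and \<open>v'\<close> odd of length \<open>m - 1\<close>; left multiplication by \<open>(1 2)\<close> matches odd and
  even permutations of each length, which gives \<open>(n - 1) a(n-1,m-1)\<close>.\<close>

definition prod_of :: "('a \<Rightarrow> 'a) set \<Rightarrow> nat \<Rightarrow> ('a \<Rightarrow> 'a) \<Rightarrow> bool" where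
  "prod_of S r v \<longleftrightarrow> (\<exists>ts. length ts = r \<and> set ts \<subseteq> S \<and> v = foldr (\<circ>) ts id)"

lemma prod_of_0 [simp]: "prod_of S 0 v \<longleftrightarrow> v = id"
  by (auto simp: prod_of_def)

lemma prod_of_Suc: "prod_of S (Suc r) v \<longleftrightarrow> (\<exists>t\<in>S. \<exists>w. prod_of S r w \<and> v = t \<circ> w)"
proof
  assume "prod_of S (Suc r) v"
  then obtain t ts where "length ts = r" "set (t # ts) \<subseteq> S" "v = foldr (\<circ>) (t # ts) id"
    unfolding prod_of_def length_Suc_conv by blast
  then show "\<exists>t\<in>S. \<exists>w. prod_of S r w \<and> v = t \<circ> w"
    unfolding prod_of_def by (intro bexI[of _ t] exI[of _ "foldr (\<circ>) ts id"]) auto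
next
  assume "\<exists>t\<in>S. \<exists>w. prod_of S r w \<and> v = t \<circ> w"
  then obtain t ts where "t \<in> S" "length ts = r" "set ts \<subseteq> S" "v = t \<circ> foldr (\<circ>) ts id"
    by (auto simp: prod_of_def)
  then show "prod_of S (Suc r) v"
    unfolding prod_of_def by (intro exI[of _ "t # ts"]) simp
qed

lemma foldr_comp_eq: "foldr (\<circ>) xs f = foldr (\<circ>) xs id \<circ> f"
  by (induction xs) (simp_all add: comp_assoc)

lemma prod_of_Suc_right: "prod_of S (Suc r) v \<longleftrightarrow> (\<exists>t\<in>S. \<exists>w. prod_of S r w \<and> v = w \<circ> t)"
proof
  assume "prod_of S (Suc r) v"
  then obtain ts where ts: "length ts = Suc r" "set ts \<subseteq> S" "v = foldr (\<circ>) ts id"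
    by (auto simp: prod_of_def)
  then obtain us u where "ts = us @ [u]"
    by (cases ts rule: rev_cases) auto
  with ts have "u \<in> S" "prod_of S r (foldr (\<circ>) us id)" "v = foldr (\<circ>) us id \<circ> u"
    by (auto simp: prod_of_def foldr_comp_eq[of us u])
  then show "\<exists>t\<in>S. \<exists>w. prod_of S r w \<and> v = w \<circ> t"
    by blast
next
  assume "\<exists>t\<in>S. \<exists>w. prod_of S r w \<and> v = w \<circ> t"
  then obtain t ts where "t \<in> S" "length ts = r" "set ts \<subseteq> S" "v = foldr (\<circ>) ts id \<circ> t"
    by (auto simp: prod_of_def)
  then show "prod_of S (Suc r) v"
    unfolding prod_of_def by (intro exI[of _ "ts @ [t]"]) (simp add: foldr_comp_eq[of ts t])
qed

lemma prod_of_mono: "S \<subseteq> S' \<Longrightarrow> prod_of S r w \<Longrightarrow> prod_of S' r w"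
  unfolding prod_of_def by blast

lemma transpose_comp_transpose_comp [simp]: "transpose a b \<circ> (transpose a b \<circ> f) = f"
  by (simp add: comp_assoc[symmetric])

lemma transpose_comp_left_eq_iff: "transpose a b \<circ> v = w \<longleftrightarrow> v = transpose a b \<circ> w"
  by auto

lemma transpose_conj:
  "transpose a b \<circ> transpose i j \<circ> transpose a b = transpose (transpose a b i) (transpose a b j)"
  by (auto simp: fun_eq_iff transpose_def)

lemma inv_comp_transpose: "bij u \<Longrightarrow> inv (u \<circ> transpose a b) = transpose a b \<circ> inv u"
  by (simp add: o_inv_distrib)

lemma inv_fixed: "bij w \<Longrightarrow> w n = n \<Longrightarrow> inv w n = n"
  by (simp add: bij_is_inj inv_f_eq)

lemma evenperm_transpose_comp:
  "permutation w \<Longrightarrow> a \<noteq> b \<Longrightarrow> evenperm (transpose a b \<circ> w) \<longleftrightarrow> \<not> evenperm w"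
  by (simp add: evenperm_comp permutation_swap_id evenperm_swap)

lemma evenperm_comp_transpose:
  "permutation w \<Longrightarrow> a \<noteq> b \<Longrightarrow> evenperm (w \<circ> transpose a b) \<longleftrightarrow> \<not> evenperm w"
  by (simp add: evenperm_comp permutation_swap_id evenperm_swap)

lemma permutes_Suc_fixing_iff:
  "w permutes {1..Suc n} \<and> w (Suc n) = Suc n \<longleftrightarrow> w permutes {1..n}"
proof
  assume w: "w permutes {1..Suc n} \<and> w (Suc n) = Suc n"
  show "w permutes {1..n}"
  proof (rule permutes_superset[of w "{1..Suc n}"])
    show "w x = x" if "x \<in> {1..Suc n} - {1..n}" for x
    proof -
      have "x = Suc n" using that by auto
      then show ?thesis using w by simp
    qed
  qed (use w in simp)
next
  assume "w permutes {1..n}"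
  then show "w permutes {1..Suc n} \<and> w (Suc n) = Suc n"
    using permutes_subset[of w "{1..n}" "{1..Suc n}"] permutes_not_in[of w "{1..n}" "Suc n"]
    by auto
qed

definition transpositions :: "nat \<Rightarrow> (nat \<Rightarrow> nat) set" where
  "transpositions n = {transpose i j | i j. i \<in> {1..n} \<and> j \<in> {1..n} \<and> i \<noteq> j}"

lemma transpositions_mono: "n \<le> n' \<Longrightarrow> transpositions n \<subseteq> transpositions n'"
  unfolding transpositions_def by force

lemma transpose_in_transpositions:
  "a \<in> {1..n} \<Longrightarrow> b \<in> {1..n} \<Longrightarrow> a \<noteq> b \<Longrightarrow> transpose a b \<in> transpositions n"
  unfolding transpositions_def by blast

lemma prod_of_transpositions_permutes:
  "prod_of (transpositions n) r w \<Longrightarrow> w permutes {1..n}"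
proof (induction r arbitrary: w)
  case (Suc r)
  then obtain a b u where "a \<in> {1..n}" "b \<in> {1..n}" "u permutes {1..n}" "w = transpose a b \<circ> u"
    by (auto simp: prod_of_Suc transpositions_def)
  then show ?case
    using permutes_compose permutes_swap_id by metis
qed simp

lemma evenperm_prod_of_transpositions:
  "prod_of (transpositions n) r w \<Longrightarrow> evenperm w \<longleftrightarrow> even r"
proof (induction r arbitrary: w)
  case (Suc r)
  then obtain a b u where ab: "a \<noteq> b" and u: "prod_of (transpositions n) r u"
    and w: "w = transpose a b \<circ> u"
    by (auto simp: prod_of_Suc transpositions_def)
  have "permutation u"
    using prod_of_transpositions_permutes[OF u] by (auto simp: permutation_permutes)
  then show ?case
    unfolding w using evenperm_transpose_comp[OF _ ab] Suc.IH[OF u] even_Suc by metis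
qed simp

definition strip :: "nat \<Rightarrow> (nat \<Rightarrow> nat) \<Rightarrow> nat \<Rightarrow> nat" where
  "strip n w = w \<circ> transpose (inv w n) n"

text \<open>\<open>trans_len n w\<close> is the least number of transpositions of \<open>{1..n}\<close> with product \<open>w\<close>:
  it counts the nontrivial steps of peeling off the largest point via
  \<open>w = strip n w \<circ> transpose (inv w n) n\<close>.\<close>

primrec trans_len :: "nat \<Rightarrow> (nat \<Rightarrow> nat) \<Rightarrow> nat" where
  "trans_len 0 w = 0"
| "trans_len (Suc n) w = trans_len n (strip (Suc n) w) + (if inv w (Suc n) = Suc n then 0 else 1)"

lemma strip_fixed: "bij w \<Longrightarrow> w n = n \<Longrightarrow> strip n w = w"
  by (simp add: strip_def inv_fixed)

lemma strip_comp_transpose: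
  assumes "bij w" "w n = n"
  shows "inv (w \<circ> transpose c n) n = c" "strip n (w \<circ> transpose c n) = w"
proof -
  have "inv w n = n" using assms by (rule inv_fixed)
  then show "inv (w \<circ> transpose c n) n = c"
    using assms(1) by (simp add: inv_comp_transpose)
  then show "strip n (w \<circ> transpose c n) = w"
    by (simp add: strip_def comp_assoc)
qed

lemma strip_permutes:
  assumes "w permutes {1..Suc n}"
  shows "strip (Suc n) w permutes {1..n}"
proof (rule permutes_superset)
  have "inv w (Suc n) \<in> {1..Suc n}"
    using permutes_in_image[OF permutes_inv[OF assms]] by simp
  then show "strip (Suc n) w permutes {1..Suc n}"
    unfolding strip_def by (intro permutes_compose[OF permutes_swap_id assms]) auto
  show "strip (Suc n) w x = x" if "x \<in> {1..Suc n} - {1..n}" for x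
    using that permutes_inverses(1)[OF assms] by (auto simp: strip_def le_Suc_eq)
qed

lemma strip_comp_transpose_cases:
  assumes u: "u permutes {1..Suc n}" and ab: "a \<in> {1..Suc n}" "b \<in> {1..Suc n}"
  obtains "strip (Suc n) (u \<circ> transpose a b) = strip (Suc n) u"
  | x y where "x \<in> {1..n}" "y \<in> {1..n}"
      "strip (Suc n) (u \<circ> transpose a b) = strip (Suc n) u \<circ> transpose x y"
      "inv (u \<circ> transpose a b) (Suc n) = Suc n \<longleftrightarrow> inv u (Suc n) = Suc n"
proof -
  note unchanged = that(1) and changed = that(2)
  define N where "N = Suc n"
  define c where "c = inv u N"
  have "bij u"
    using u by (rule permutes_bij)
  have c: "c \<in> {1..N}" "u c = N"
    using permutes_in_image[OF permutes_inv[OF u], of N] permutes_inverses(1)[OF u]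
    by (auto simp: c_def N_def)
  have strip_u: "strip N u = u \<circ> transpose c N"
    by (simp add: strip_def c_def)
  have inv_ut: "inv (u \<circ> transpose x y) N = transpose x y c" for x y
    using \<open>bij u\<close> by (simp add: inv_comp_transpose c_def)
  have strip_ut: "strip N (u \<circ> transpose x y) = u \<circ> transpose x y \<circ> transpose (transpose x y c) N"
    for x y
    by (simp add: strip_def inv_ut)
  have moving: thesis if x: "x \<in> {1..n}" "transpose a b = transpose x N" for x
  proof -
    have "x \<noteq> N" using x by (simp add: N_def)
    consider "c = N" | "c = x" | "c \<in> {1..n}" "c \<noteq> x"
      using c(1) by (auto simp: N_def le_Suc_eq)
    then show thesis
    proof cases
      case 1
      then have "strip N (u \<circ> transpose x N) = strip N u"
        using \<open>x \<noteq> N\<close> by (simp add: strip_ut strip_u comp_assoc)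
      then show thesis
        by (rule unchanged[unfolded x(2) N_def[symmetric]])
    next
      case 2
      then have "strip N (u \<circ> transpose x N) = strip N u"
        by (simp add: strip_ut strip_u)
      then show thesis
        by (rule unchanged[unfolded x(2) N_def[symmetric]])
    next
      case 3
      then have "c \<noteq> N" by (simp add: N_def)
      have "transpose x N \<circ> transpose c N = transpose c N \<circ> transpose x c"
        using transpose_conj[of c N x N] 3 \<open>x \<noteq> N\<close>
        by (simp add: comp_assoc transpose_comp_left_eq_iff transpose_apply_other)
      then have "strip N (u \<circ> transpose x N) = strip N u \<circ> transpose x c"
        using 3 \<open>x \<noteq> N\<close> \<open>c \<noteq> N\<close> by (simp add: strip_ut strip_u comp_assoc transpose_apply_other)
      moreover have "inv (u \<circ> transpose x N) N \<noteq> N" "inv u N \<noteq> N"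
        using 3 \<open>x \<noteq> N\<close> \<open>c \<noteq> N\<close> by (auto simp: inv_ut c_def[symmetric] transpose_apply_other)
      ultimately show thesis
        using changed[of x c] x(1) 3(1) unfolding x(2) N_def by blast
    qed
  qed
  consider "a = b" | "a \<noteq> N" "b \<noteq> N" | x where "x \<in> {1..n}" "transpose a b = transpose x N"
    using ab by (auto simp: N_def le_Suc_eq transpose_commute)
  then show thesis
  proof cases
    case 1
    then show thesis
      using unchanged by simp
  next
    case 2
    then have ab': "a \<in> {1..n}" "b \<in> {1..n}"
      using ab by (auto simp: N_def le_Suc_eq)
    have "transpose c N \<circ> transpose a b = transpose a b \<circ> transpose (transpose a b c) N"
      using transpose_conj[of a b c N] 2
      by (simp add: transpose_apply_other comp_assoc transpose_comp_left_eq_iff)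
    then have "strip N (u \<circ> transpose a b) = strip N u \<circ> transpose a b"
      by (simp add: strip_ut strip_u comp_assoc)
    moreover have "transpose a b c = N \<longleftrightarrow> c = N"
      using 2 by (auto simp: transpose_def)
    ultimately show thesis
      using changed[OF ab', folded N_def] by (simp add: inv_ut c_def[symmetric])
  next
    case 3
    then show thesis
      by (rule moving)
  qed
qed

lemma trans_len_comp_transpose_le:
  "u permutes {1..n} \<Longrightarrow> a \<in> {1..n} \<Longrightarrow> b \<in> {1..n} \<Longrightarrow>
     trans_len n (u \<circ> transpose a b) \<le> trans_len n u + 1"
proof (induction n arbitrary: u a b)
  case (Suc n)
  have su: "strip (Suc n) u permutes {1..n}"
    using strip_permutes[OF Suc.prems(1)] .
  from Suc.prems show ?case
  proof (cases rule: strip_comp_transpose_cases)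
    case 1
    have "trans_len (Suc n) (u \<circ> transpose a b) \<le> trans_len n (strip (Suc n) u) + 1"
      unfolding trans_len.simps(2) 1 by simp
    then show ?thesis
      using trans_len.simps(2)[of n u] by linarith
  next
    case (2 x y)
    show ?thesis
      unfolding trans_len.simps(2) 2(3,4) using Suc.IH[OF su 2(1,2)] by linarith
  qed
qed simp

lemma trans_len_id [simp]: "trans_len n id = 0"
  by (induction n) (simp_all add: strip_def)

lemma trans_len_le: "prod_of (transpositions n) r w \<Longrightarrow> trans_len n w \<le> r"
proof (induction r arbitrary: w)
  case (Suc r)
  then obtain a b u where "a \<in> {1..n}" "b \<in> {1..n}" "prod_of (transpositions n) r u"
    "w = u \<circ> transpose a b"
    by (auto simp: prod_of_Suc_right transpositions_def)
  then show ?case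
    using trans_len_comp_transpose_le[OF prod_of_transpositions_permutes] Suc.IH
    by (metis add_le_mono1 le_trans Suc_eq_plus1)
qed simp

lemma prod_of_trans_len: "w permutes {1..n} \<Longrightarrow> prod_of (transpositions n) (trans_len n w) w"
proof (induction n arbitrary: w)
  case (Suc n)
  define c where "c = inv w (Suc n)"
  have IH: "prod_of (transpositions (Suc n)) (trans_len n (strip (Suc n) w)) (strip (Suc n) w)"
    using Suc.IH[OF strip_permutes[OF Suc.prems]]
    by (rule prod_of_mono[OF transpositions_mono, rotated]) simp
  show ?case
  proof (cases "c = Suc n")
    case True
    then have "strip (Suc n) w = w"
      by (simp add: strip_def c_def)
    with IH True show ?thesis
      by (simp add: c_def)
  next
    case False
    have "c \<in> {1..Suc n}"
      using permutes_in_image[OF permutes_inv[OF Suc.prems]] by (simp add: c_def)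
    then have "transpose c (Suc n) \<in> transpositions (Suc n)"
      using False by (simp add: transpose_in_transpositions)
    moreover have "w = strip (Suc n) w \<circ> transpose c (Suc n)"
      by (simp add: strip_def c_def comp_assoc)
    ultimately have "prod_of (transpositions (Suc n)) (Suc (trans_len n (strip (Suc n) w))) w"
      unfolding prod_of_Suc_right using IH by blast
    then show ?thesis
      using False by (simp add: c_def)
  qed
qed simp

text \<open>The simplifier rewrites \<open>1\<close> to \<open>Suc 0\<close>, so rules stated for \<open>s12\<close> do not fire as
  rewrite rules; below they are supplied as instantiated facts instead.\<close>

abbreviation s12 :: "nat \<Rightarrow> nat" where
  "s12 \<equiv> transpose 1 2"

lemma s12_permutes: "2 \<le> n \<Longrightarrow> s12 permutes {1..n}"
  by (simp add: permutes_swap_id)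

definition coset_len :: "nat \<Rightarrow> (nat \<Rightarrow> nat) \<Rightarrow> nat" where
  "coset_len n w = min (trans_len n w) (trans_len n (s12 \<circ> w))"

lemma coset_len_s12: "coset_len n (s12 \<circ> w) = coset_len n w"
  by (simp add: coset_len_def min.commute)

lemma coset_len_Suc:
  assumes "2 \<le> n" "bij w"
  shows "coset_len (Suc n) w = coset_len n (strip (Suc n) w) + (if inv w (Suc n) = Suc n then 0 else 1)"
proof -
  have inv_eq: "inv (s12 \<circ> w) (Suc n) = inv w (Suc n)"
    using assms by (simp add: o_inv_distrib transpose_apply_other)
  then have "strip (Suc n) (s12 \<circ> w) = s12 \<circ> strip (Suc n) w"
    by (simp add: strip_def comp_assoc)
  then show ?thesis
    using inv_eq by (simp add: coset_len_def)
qed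

lemma T_alt_eq: "T_alt n = (\<lambda>t. s12 \<circ> t) ` transpositions n"
proof -
  have "{transpose i j | i j. 1 \<le> i \<and> i < j \<and> j \<le> n} = transpositions n"
  proof
    show "{transpose i j | i j. 1 \<le> i \<and> i < j \<and> j \<le> n} \<subseteq> transpositions n"
      unfolding transpositions_def by fastforce
    show "transpositions n \<subseteq> {transpose i j | i j. 1 \<le> i \<and> i < j \<and> j \<le> n}"
    proof
      fix t assume "t \<in> transpositions n"
      then obtain i j where "i \<in> {1..n}" "j \<in> {1..n}" "i \<noteq> j" "t = transpose i j"
        unfolding transpositions_def by blast
      then show "t \<in> {transpose i j | i j. 1 \<le> i \<and> i < j \<and> j \<le> n}"
        by (cases "i < j") (force simp: transpose_commute)+
    qed
  qed
  moreover have "T_alt n = (\<lambda>t. s12 \<circ> t) ` {transpose i j | i j. 1 \<le> i \<and> i < j \<and> j \<le> n}"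
    unfolding T_alt_def by blast
  ultimately show ?thesis
    by simp
qed

lemma transpositions_conj_s12:
  assumes "2 \<le> n"
  shows "(\<lambda>t. s12 \<circ> t \<circ> s12) ` transpositions n = transpositions n"
proof -
  have conj: "s12 \<circ> t \<circ> s12 \<in> transpositions n" if t: "t \<in> transpositions n" for t
  proof -
    obtain i j where ij: "i \<in> {1..n}" "j \<in> {1..n}" "i \<noteq> j" "t = transpose i j"
      using t unfolding transpositions_def by blast
    have "s12 \<circ> t \<circ> s12 = transpose (s12 i) (s12 j)"
      unfolding ij(4) by (rule transpose_conj)
    moreover have "s12 i \<in> {1..n}" "s12 j \<in> {1..n}"
      using permutes_in_image[OF s12_permutes[OF assms]] ij by auto
    moreover have "s12 i \<noteq> s12 j"
      using ij(3) by (metis transpose_eq_imp_eq)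
    ultimately show ?thesis
      by (metis transpose_in_transpositions)
  qed
  moreover have "t = s12 \<circ> (s12 \<circ> t \<circ> s12) \<circ> s12" for t :: "nat \<Rightarrow> nat"
    by (simp add: comp_assoc)
  ultimately show ?thesis
    by (auto intro: image_eqI)
qed

lemma prod_of_T_alt_iff:
  assumes "2 \<le> n"
  shows "prod_of (T_alt n) r v \<longleftrightarrow> prod_of (transpositions n) r (if even r then v else s12 \<circ> v)"
proof (induction r arbitrary: v)
  case (Suc r)
  let ?Tr = "transpositions n"
  have "prod_of (T_alt n) (Suc r) v \<longleftrightarrow>
      (\<exists>t\<in>?Tr. \<exists>w. prod_of ?Tr r (if even r then w else s12 \<circ> w) \<and> v = s12 \<circ> t \<circ> w)"
    unfolding prod_of_Suc Suc.IH unfolding T_alt_eq by (simp add: comp_assoc)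
  also have "\<dots> \<longleftrightarrow> prod_of ?Tr (Suc r) (if even (Suc r) then v else s12 \<circ> v)"
  proof (cases "even r")
    case True
    then show ?thesis
      by (simp add: prod_of_Suc transpose_comp_left_eq_iff comp_assoc)
  next
    case False
    have "(\<exists>t\<in>?Tr. \<exists>w. prod_of ?Tr r (s12 \<circ> w) \<and> v = s12 \<circ> t \<circ> w) \<longleftrightarrow>
        (\<exists>t\<in>?Tr. \<exists>w. prod_of ?Tr r w \<and> v = (s12 \<circ> t \<circ> s12) \<circ> w)"
      by (metis comp_assoc transpose_comp_transpose_comp)
    also have "\<dots> \<longleftrightarrow> (\<exists>t\<in>(\<lambda>t. s12 \<circ> t \<circ> s12) ` ?Tr. \<exists>w. prod_of ?Tr r w \<and> v = t \<circ> w)"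
      by blast
    also have "\<dots> \<longleftrightarrow> (\<exists>t\<in>?Tr. \<exists>w. prod_of ?Tr r w \<and> v = t \<circ> w)"
      unfolding transpositions_conj_s12[OF assms] ..
    finally show ?thesis
      using False by (simp add: prod_of_Suc)
  qed
  finally show ?case .
qed simp

lemma len_T_eq_coset_len:
  assumes n: "2 \<le> n" and v: "v \<in> alt_group n"
  shows "len_T n v = coset_len n v"
proof -
  let ?Tr = "transpositions n"
  have vp: "v permutes {1..n}" and ev: "evenperm v"
    using v unfolding alt_group_def by auto
  have svp: "s12 \<circ> v permutes {1..n}"
    by (rule permutes_compose[OF vp s12_permutes[OF n]])
  have "permutation v"
    using vp by (auto simp: permutation_permutes)
  then have odd_sv: "\<not> evenperm (s12 \<circ> v)"
    using ev evenperm_transpose_comp[of v 1 2] by simp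
  have "len_T n v = (LEAST r. prod_of (T_alt n) r v)"
    unfolding len_T_def prod_of_def ..
  also have "\<dots> = coset_len n v"
  proof (rule Least_equality)
    show "prod_of (T_alt n) (coset_len n v) v"
    proof (cases "trans_len n v \<le> trans_len n (s12 \<circ> v)")
      case True
      have "prod_of ?Tr (trans_len n v) v"
        by (rule prod_of_trans_len[OF vp])
      moreover from this have "even (trans_len n v)"
        using ev evenperm_prod_of_transpositions by blast
      ultimately show ?thesis
        using True unfolding coset_len_def prod_of_T_alt_iff[OF n] by simp
    next
      case False
      have "prod_of ?Tr (trans_len n (s12 \<circ> v)) (s12 \<circ> v)"
        by (rule prod_of_trans_len[OF svp])
      moreover from this have "odd (trans_len n (s12 \<circ> v))"
        using odd_sv evenperm_prod_of_transpositions by blast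
      ultimately show ?thesis
        using False unfolding coset_len_def prod_of_T_alt_iff[OF n] by simp
    qed
    show "coset_len n v \<le> r" if "prod_of (T_alt n) r v" for r
    proof -
      have "trans_len n (if even r then v else s12 \<circ> v) \<le> r"
        using that unfolding prod_of_T_alt_iff[OF n] by (rule trans_len_le)
      then show ?thesis
        unfolding coset_len_def by (cases "even r") auto
    qed
  qed
  finally show ?thesis .
qed

definition level :: "nat \<Rightarrow> bool \<Rightarrow> nat \<Rightarrow> (nat \<Rightarrow> nat) set" where
  "level n p m = {v. v permutes {1..n} \<and> evenperm v = p \<and> coset_len n v = m}"

lemma finite_level: "finite (level n p m)"
  by (rule finite_subset[OF _ finite_permutations[of "{1..n}"]]) (auto simp: level_def)

lemma a_count_eq_card_level: "2 \<le> n \<Longrightarrow> a_count n m = card (level n True m)"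
  unfolding a_count_def level_def
  by (rule arg_cong[where f = card]) (auto simp: len_T_eq_coset_len alt_group_def)

lemma card_level_parity:
  assumes "2 \<le> n"
  shows "card (level n (\<not> p) m) = card (level n p m)"
proof -
  have maps: "(\<lambda>v. s12 \<circ> v) ` level n q m \<subseteq> level n (\<not> q) m" for q
  proof
    fix v' assume "v' \<in> (\<lambda>v. s12 \<circ> v) ` level n q m"
    then obtain v where v: "v permutes {1..n}" "evenperm v = q" "coset_len n v = m" "v' = s12 \<circ> v"
      by (auto simp: level_def)
    then have "permutation v"
      by (auto simp: permutation_permutes)
    then show "v' \<in> level n (\<not> q) m"
      using v permutes_compose[OF v(1) s12_permutes[OF assms]]
        evenperm_transpose_comp[of v 1 2] coset_len_s12[of n v]
      unfolding level_def by simp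
  qed
  have inj: "inj_on (\<lambda>v. s12 \<circ> v) A" for A
    by (rule inj_onI) (metis transpose_comp_transpose_comp)
  show ?thesis
    using card_inj_on_le[OF inj maps finite_level, of "\<not> p"]
      card_inj_on_le[OF inj maps finite_level, of p]
    by simp
qed

lemma level_Suc_fixing:
  assumes "2 \<le> n"
  shows "{v \<in> level (Suc n) p m. v (Suc n) = Suc n} = level n p m"
proof -
  have len: "coset_len (Suc n) v = coset_len n v" if "v permutes {1..n}" for v
  proof -
    have "bij v" "v (Suc n) = Suc n"
      using that permutes_Suc_fixing_iff permutes_bij by blast+
    then show ?thesis
      using coset_len_Suc[OF assms \<open>bij v\<close>] strip_fixed inv_fixed by simp
  qed
  show ?thesis
  proof (rule set_eqI)
    fix v
    show "v \<in> {v \<in> level (Suc n) p m. v (Suc n) = Suc n} \<longleftrightarrow> v \<in> level n p m"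
      using permutes_Suc_fixing_iff[of v n] len[of v] by (auto simp: level_def)
  qed
qed

lemma level_Suc_moving:
  assumes "2 \<le> n" "1 \<le> m"
  shows "{v \<in> level (Suc n) p m. v (Suc n) \<noteq> Suc n} =
    (\<lambda>(w, c). w \<circ> transpose c (Suc n)) ` (level n (\<not> p) (m - 1) \<times> {1..n})"
    (is "?A = ?f ` ?B")
proof
  show "?f ` ?B \<subseteq> ?A"
  proof
    fix x assume "x \<in> ?f ` ?B"
    then obtain w c where w: "w \<in> level n (\<not> p) (m - 1)" and c: "c \<in> {1..n}"
      and x: "x = w \<circ> transpose c (Suc n)"
      by auto
    from w have wp: "w permutes {1..Suc n}" "w (Suc n) = Suc n"
      using permutes_Suc_fixing_iff[of w n] by (simp_all add: level_def)
    then have "bij w" "permutation w"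
      by (auto simp: permutes_bij permutation_permutes)
    note strip = strip_comp_transpose[OF this(1) wp(2), of c]
    have "w \<circ> transpose c (Suc n) permutes {1..Suc n}"
      using c by (intro permutes_compose[OF permutes_swap_id wp(1)]) auto
    moreover have "w c \<noteq> Suc n"
      using w c permutes_in_image[of w "{1..n}" c] by (auto simp: level_def)
    moreover have "coset_len (Suc n) (w \<circ> transpose c (Suc n)) = m"
      using c w assms \<open>bij w\<close> unfolding coset_len_Suc[OF assms(1) bij_comp[OF bij_transpose \<open>bij w\<close>]]
      by (simp add: strip level_def)
    ultimately show "x \<in> ?A"
      unfolding x using w c \<open>permutation w\<close> by (auto simp: level_def evenperm_comp_transpose)
  qed
  show "?A \<subseteq> ?f ` ?B"
  proof
    fix v assume v: "v \<in> ?A"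
    define c where "c = inv v (Suc n)"
    have vp: "v permutes {1..Suc n}" "bij v" "permutation v"
      using v by (auto simp: level_def permutes_bij permutation_permutes)
    have "c \<in> {1..Suc n}"
      using permutes_in_image[OF permutes_inv[OF vp(1)]] by (simp add: c_def)
    moreover have "v c = Suc n" "v (Suc n) \<noteq> Suc n"
      using v permutes_inverses(1)[OF vp(1)] by (auto simp: c_def)
    ultimately have "c \<in> {1..Suc n}" "c \<noteq> Suc n"
      by auto
    then have c: "c \<in> {1..n}"
      by (auto simp: le_Suc_eq)
    have v_eq: "v = strip (Suc n) v \<circ> transpose c (Suc n)"
      by (simp add: strip_def c_def comp_assoc)
    have "evenperm (strip (Suc n) v) \<longleftrightarrow> \<not> p"
      using v vp(3) \<open>c \<noteq> Suc n\<close> evenperm_comp_transpose[of v c "Suc n"]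
      by (auto simp: level_def strip_def c_def)
    moreover have "coset_len n (strip (Suc n) v) = m - 1"
      using v \<open>c \<noteq> Suc n\<close> coset_len_Suc[OF assms(1) vp(2)] by (auto simp: level_def c_def)
    ultimately have "strip (Suc n) v \<in> level n (\<not> p) (m - 1)"
      using strip_permutes[OF vp(1)] by (simp add: level_def)
    then show "v \<in> ?f ` ?B"
      using c v_eq by (auto intro!: image_eqI[of v _ "(strip (Suc n) v, c)"])
  qed
qed

lemma card_level_Suc:
  assumes "2 \<le> n" "1 \<le> m"
  shows "card (level (Suc n) p m) = card (level n p m) + n * card (level n p (m - 1))"
proof -
  let ?f = "\<lambda>(w, c). w \<circ> transpose c (Suc n)" and ?B = "level n (\<not> p) (m - 1) \<times> {1..n}"
  have "inj_on ?f ?B"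
  proof (rule inj_on_inverseI[where g = "\<lambda>v. (strip (Suc n) v, inv v (Suc n))"])
    fix x assume "x \<in> ?B"
    then obtain w c where x: "x = (w, c)" and "w permutes {1..n}"
      by (auto simp: level_def)
    then have "bij w" "w (Suc n) = Suc n"
      using permutes_Suc_fixing_iff[of w n] by (auto simp: permutes_bij)
    then show "(strip (Suc n) (?f x), inv (?f x) (Suc n)) = x"
      using strip_comp_transpose[of w "Suc n" c] x by simp
  qed
  then have "card {v \<in> level (Suc n) p m. v (Suc n) \<noteq> Suc n} = n * card (level n (\<not> p) (m - 1))"
    by (simp add: level_Suc_moving[OF assms] card_image card_cartesian_product)
  moreover have "level (Suc n) p m =
      {v \<in> level (Suc n) p m. v (Suc n) = Suc n} \<union> {v \<in> level (Suc n) p m. v (Suc n) \<noteq> Suc n}"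
    by blast
  ultimately show ?thesis
    using card_Un_disjoint[OF finite_subset[OF _ finite_level] finite_subset[OF _ finite_level]]
      level_Suc_fixing[OF assms(1)] card_level_parity[OF assms(1)]
    by (metis (no_types, lifting) disjoint_iff mem_Collect_eq subsetI)
qed

theorem corollary5p4:
  fixes n m :: nat
  assumes "n \<ge> 3" and "1 \<le> m" and "m \<le> n - 2"
  shows "a_count n m = (n - 1) * a_count (n - 1) (m - 1) + a_count (n - 1) m"
proof -
  obtain k where n: "n = Suc k" and k: "2 \<le> k"
    using assms(1) by (cases n) auto
  have "card (level (Suc k) True m) = card (level k True m) + k * card (level k True (m - 1))"
    by (rule card_level_Suc[OF k assms(2)])
  then show ?thesis
    using a_count_eq_card_level[OF k] a_count_eq_card_level[of "Suc k"] k unfolding n by simp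
qed

end
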